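(* Let $\gamma:\mathbb{S}^3\to\mathrm{SO}(3)$ be the standard map from unit quaternions $\mathbf{q}=(q_0,q_1,q_2,q_3)$ to rotation matrices, $$\gamma(\mathbf{q})=\begin{pmatrix}1-2q_2^2-2q_3^2 & 2q_1q_2-2q_0q_3 & 2q_1q_3+2q_0q_2\\ 2q_1q_2+2q_0q_3 & 1-2q_1^2-2q_3^2 & 2q_2q_3-2q_0q_1\\ 2q_1q_3-2q_0q_2 & 2q_2q_3+2q_0q_1 & 1-2q_1^2-2q_2^2\end{pmatrix}.$$ If $\mathbf{R}\in\mathrm{SO}(3)$ follows the Rotation Laplace distribution $\mathcal{RL}(\mathbf{A})$ for some $\mathbf{A}\in\mathbb{R}^{3\times3}$, then $\mathbf{q}=\gamma^{-1}(\mathbf{R})\in\mathbb{S}^3$ follows a Quaternion Laplace distribution $\mathcal{QL}(\mathbf{M},\mathbf{Z})$ for some $\mathbf{M}\in\mathrm{O}(4)$ and some $\mathbf{Z}=\operatorname{diag}(0,z_1,z_2,z_3)$.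
   Context: Rotation Laplace distribution $\mathcal{RL}(\mathbf{A})$: for $\mathbf{A}\in\mathbb{R}^{3\times3}$ with proper SVD $\mathbf{A}=\mathbf{U}\mathbf{S}\mathbf{V}^T$, density with respect to the Haar measure on $\mathrm{SO}(3)$ normalized to total mass $1$ given by $p(\mathbf{R};\mathbf{A})=\frac{1}{F(\mathbf{A})}\exp(-\sqrt{\operatorname{tr}(\mathbf{S}-\mathbf{A}^T\mathbf{R})})/\sqrt{\operatorname{tr}(\mathbf{S}-\mathbf{A}^T\mathbf{R})}$. Proper SVD: from an ordinary SVD $\mathbf{A}=\mathbf{U}'\operatorname{diag}(s_1',s_2',s_3')(\mathbf{V}')^T$, set $\mathbf{U}=\mathbf{U}'\operatorname{diag}(1,1,\det\mathbf{U}')$, $\mathbf{V}=\mathbf{V}'\operatorname{diag}(1,1,\det\mathbf{V}')$, $\mathbf{S}=\operatorname{diag}(s_1',s_2',\det(\mathbf{U}'\mathbf{V}')s_3')$. Quaternion Laplace distribution $\mathcal{QL}(\mathbf{M},\mathbf{Z})$ with $\mathbf{M}\in\mathrm{O}(4)$, $\mathbf{Z}=\operatorname{diag}(0,z_1,z_2,z_3)$: density on $\mathbb{S}^3$ (w.r.t. surface measure) proportional to $\exp(-\sqrt{-\mathbf{q}^T\mathbf{M}\mathbf{Z}\mathbf{M}^T\mathbf{q}})/\sqrt{-\mathbf{q}^T\mathbf{M}\mathbf{Z}\mathbf{M}^T\mathbf{q}}$. Since $\gamma(\mathbf{q})=\gamma(-\mathbf{q})$, $\gamma^{-1}(\mathbf{R})$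 denotes a preimage quaternion (the distributions involved are antipodally symmetric). *)

theory Defs
  imports "HOL-Probability.Probability"
begin

definition SO3 :: "(real^3^3) set" where
  "SO3 = {R. orthogonal_matrix R \<and> det R = 1}"

definition S3 :: "(real^4) set" where
  "S3 = sphere 0 1"

definition diag3 :: "real^3 \<Rightarrow> real^3^3" where
  "diag3 s = (\<chi> i j. if i = j then s $ i else 0)"

definition diag4 :: "real^4 \<Rightarrow> real^4^4" where
  "diag4 s = (\<chi> i j. if i = j then s $ i else 0)"

definition quat_to_rot :: "real^4 \<Rightarrow> real^3^3" where
  "quat_to_rot q = (let q0 = q$1; q1 = q$2; q2 = q$3; q3 = q$4 in
     vector [
       vector [1 - 2*q2^2 - 2*q3^2, 2*q1*q2 - 2*q0*q3, 2*q1*q3 + 2*q0*q2],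
       vector [2*q1*q2 + 2*q0*q3, 1 - 2*q1^2 - 2*q3^2, 2*q2*q3 - 2*q0*q1],
       vector [2*q1*q3 - 2*q0*q2, 2*q2*q3 + 2*q0*q1, 1 - 2*q1^2 - 2*q2^2]])"

definition Haar_SO3 :: "(real^3^3) measure" where
  "Haar_SO3 = (THE \<mu>. prob_space \<mu> \<and> sets \<mu> = sets (restrict_space borel SO3) \<and>
      (\<forall>Q\<in>SO3. distr \<mu> \<mu> (\<lambda>R. Q ** R) = \<mu>))"

text \<open>Normalized surface measure on S^3, realised as the cone measure:
  the image of the uniform distribution on the unit ball under radial projection.\<close>
definition unif_S3 :: "(real^4) measure" where
  "unif_S3 = distr (uniform_measure lborel (cball 0 1)) (restrict_space borel S3)
      (\<lambda>x. if x = 0 then axis 1 1 else x /\<^sub>R norm x)"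

definition ordinary_svd :: "real^3^3 \<Rightarrow> real^3^3 \<Rightarrow> real^3 \<Rightarrow> real^3^3 \<Rightarrow> bool" where
  "ordinary_svd A U s V \<longleftrightarrow> orthogonal_matrix U \<and> orthogonal_matrix V \<and>
      s$1 \<ge> s$2 \<and> s$2 \<ge> s$3 \<and> s$3 \<ge> 0 \<and> A = U ** diag3 s ** transpose V"

definition proper_svd_S :: "real^3^3 \<Rightarrow> real^3^3" where
  "proper_svd_S A = (let (U', s, V') = (SOME (U', s, V'). ordinary_svd A U' s V') in
      diag3 (vector [s$1, s$2, det (U' ** V') * s$3]))"

definition RL_f :: "real^3^3 \<Rightarrow> real^3^3 \<Rightarrow> real" where
  "RL_f A R = (let t = trace (proper_svd_S A - transpose A ** R) in exp (- sqrt t) / sqrt t)"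

definition RL :: "real^3^3 \<Rightarrow> (real^3^3) measure" where
  "RL A = density Haar_SO3
      (\<lambda>R. ennreal (RL_f A R / (\<integral>R'. RL_f A R' \<partial>Haar_SO3)))"

definition QL_f :: "real^4^4 \<Rightarrow> real^4^4 \<Rightarrow> real^4 \<Rightarrow> real" where
  "QL_f M Z q = (let t = - (q \<bullet> ((M ** Z ** transpose M) *v q)) in exp (- sqrt t) / sqrt t)"

definition QL :: "real^4^4 \<Rightarrow> real^4^4 \<Rightarrow> (real^4) measure" where
  "QL M Z = density unif_S3
      (\<lambda>q. ennreal (QL_f M Z q / (\<integral>q'. QL_f M Z q' \<partial>unif_S3)))"

end

theory Submission
  imports Defs
begin

(* The quaternion map is a double cover S3 -> SO(3) and a group homomorphism, and left and right
   multiplication by unit quaternions are orthogonal maps of R^4.  Hence the push-forward of the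
   uniform measure on S3 is a bi-invariant probability measure on SO(3), and so, by uniqueness of
   the Haar measure (a Fubini argument), it is the Haar measure.  Writing A = U S V^T with U, V in
   SO(3) and u, v preimages of U, V, the substitution p = u^* q v turns tr(S - A^T gamma(q)) into
   the quadratic form 2(s2+s3) p1^2 + 2(s1+s3) p2^2 + 2(s1+s2) p3^2, i.e. into -q^T M Z M^T q with
   M the matrix of q |-> u^* q v.  The Rotation Laplace density composed with gamma is therefore a
   Quaternion Laplace density, and push-forward commutes with normalised densities. *)

section \<open>Quaternions and the rotation map\<close>

lemma vector_4 [simp]:
  "(vector [x, y, z, w] :: ('a::zero)^4) $ 1 = x"
  "(vector [x, y, z, w] :: ('a::zero)^4) $ 2 = y"
  "(vector [x, y, z, w] :: ('a::zero)^4) $ 3 = z"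
  "(vector [x, y, z, w] :: ('a::zero)^4) $ 4 = w"
  unfolding vector_def by simp_all

definition qmul :: "real^4 \<Rightarrow> real^4 \<Rightarrow> real^4" where
  "qmul a b = vector [a$1*b$1 - a$2*b$2 - a$3*b$3 - a$4*b$4,
                      a$1*b$2 + a$2*b$1 + a$3*b$4 - a$4*b$3,
                      a$1*b$3 - a$2*b$4 + a$3*b$1 + a$4*b$2,
                      a$1*b$4 + a$2*b$3 - a$3*b$2 + a$4*b$1]"

definition qconj :: "real^4 \<Rightarrow> real^4" where
  "qconj a = vector [a$1, -a$2, -a$3, -a$4]"

definition quat_sqnorm :: "real^4 \<Rightarrow> real" where
  "quat_sqnorm q = q$1^2 + q$2^2 + q$3^2 + q$4^2"

text \<open>The homogeneous quadratic form behind \<^const>\<open>quat_to_rot\<close>: it equals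
  \<open>|q|\<^sup>2 \<gamma>(q / |q|)\<close>, and it is multiplicative on all of \<open>\<real>\<^sup>4\<close>.\<close>
definition quat_rot_hom :: "real^4 \<Rightarrow> real^3^3" where
  "quat_rot_hom q = (let q0 = q$1; q1 = q$2; q2 = q$3; q3 = q$4 in
     vector [
       vector [q0^2 + q1^2 - q2^2 - q3^2, 2*q1*q2 - 2*q0*q3, 2*q1*q3 + 2*q0*q2],
       vector [2*q1*q2 + 2*q0*q3, q0^2 - q1^2 + q2^2 - q3^2, 2*q2*q3 - 2*q0*q1],
       vector [2*q1*q3 - 2*q0*q2, 2*q2*q3 + 2*q0*q1, q0^2 - q1^2 - q2^2 + q3^2]])"

lemma quat_sqnorm_eq_norm: "quat_sqnorm q = norm q ^ 2"
  by (simp only: power2_norm_eq_inner) (simp add: inner_vec_def sum_4 quat_sqnorm_def power2_eq_square)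

lemma norm_eq_sqrt_quat_sqnorm: "norm q = sqrt (quat_sqnorm q)"
  by (simp add: quat_sqnorm_eq_norm)

lemma S3_iff_quat_sqnorm: "q \<in> S3 \<longleftrightarrow> quat_sqnorm q = 1"
  using norm_ge_zero[of q] unfolding S3_def quat_sqnorm_eq_norm mem_sphere_0 power2_eq_1_iff by linarith

lemma quat_sqnorm_qmul: "quat_sqnorm (qmul a b) = quat_sqnorm a * quat_sqnorm b"
  by (simp add: quat_sqnorm_def qmul_def power2_eq_square algebra_simps)

lemma quat_sqnorm_qconj: "quat_sqnorm (qconj a) = quat_sqnorm a"
  by (simp add: quat_sqnorm_def qconj_def)

lemma quat_sqnorm_scaleR: "quat_sqnorm (c *\<^sub>R q) = c^2 * quat_sqnorm q"
  by (simp add: quat_sqnorm_def power2_eq_square algebra_simps)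

lemma qmul_in_S3: "a \<in> S3 \<Longrightarrow> b \<in> S3 \<Longrightarrow> qmul a b \<in> S3"
  by (simp add: S3_iff_quat_sqnorm quat_sqnorm_qmul)

lemma qconj_in_S3: "a \<in> S3 \<Longrightarrow> qconj a \<in> S3"
  by (simp add: S3_iff_quat_sqnorm quat_sqnorm_qconj)

lemma linear_qmul_left: "linear (qmul a)"
  by (rule linearI) (simp_all add: qmul_def vec_eq_iff forall_4 algebra_simps)

lemma linear_qmul_right: "linear (\<lambda>q. qmul q b)"
  by (rule linearI) (simp_all add: qmul_def vec_eq_iff forall_4 algebra_simps)

lemma orthogonal_transformation_qmul_left:
  "a \<in> S3 \<Longrightarrow> orthogonal_transformation (qmul a)"
  by (simp add: orthogonal_transformation linear_qmul_left norm_eq_sqrt_quat_sqnorm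
      quat_sqnorm_qmul S3_iff_quat_sqnorm)

lemma orthogonal_transformation_qmul_right:
  "b \<in> S3 \<Longrightarrow> orthogonal_transformation (\<lambda>q. qmul q b)"
  by (simp add: orthogonal_transformation linear_qmul_right norm_eq_sqrt_quat_sqnorm
      quat_sqnorm_qmul S3_iff_quat_sqnorm)

lemma quat_rot_hom_qmul: "quat_rot_hom (qmul a b) = quat_rot_hom a ** quat_rot_hom b"
  unfolding vec_eq_iff forall_3
  by (simp add: quat_rot_hom_def qmul_def matrix_matrix_mult_def sum_3 Let_def
      power2_eq_square algebra_simps)

lemma quat_rot_hom_scaleR: "quat_rot_hom (c *\<^sub>R q) = c^2 *\<^sub>R quat_rot_hom q"
  unfolding vec_eq_iff forall_3
  by (simp add: quat_rot_hom_def Let_def power2_eq_square algebra_simps)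

lemma transpose_quat_rot_hom_mult:
  "transpose (quat_rot_hom q) ** quat_rot_hom q = (quat_sqnorm q)^2 *\<^sub>R mat 1"
  unfolding vec_eq_iff forall_3
  by (simp add: quat_rot_hom_def quat_sqnorm_def transpose_def matrix_matrix_mult_def sum_3
      mat_def Let_def power2_eq_square algebra_simps)

lemma det_quat_rot_hom: "det (quat_rot_hom q) = (quat_sqnorm q)^3"
  by (simp add: det_3 quat_rot_hom_def quat_sqnorm_def Let_def power2_eq_square
      power3_eq_cube algebra_simps)

lemma quat_to_rot_eq_hom:
  assumes "q \<in> S3"
  shows "quat_to_rot q = quat_rot_hom q"
proof -
  have "q$1^2 + q$2^2 + q$3^2 + q$4^2 = 1"
    using assms by (simp add: S3_iff_quat_sqnorm quat_sqnorm_def)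
  then show ?thesis
    unfolding vec_eq_iff forall_3 by (simp add: quat_rot_hom_def quat_to_rot_def Let_def)
qed

lemma quat_to_rot_qmul:
  "a \<in> S3 \<Longrightarrow> b \<in> S3 \<Longrightarrow> quat_to_rot (qmul a b) = quat_to_rot a ** quat_to_rot b"
  by (simp add: quat_to_rot_eq_hom qmul_in_S3 quat_rot_hom_qmul)

lemma quat_to_rot_qconj: "quat_to_rot (qconj q) = transpose (quat_to_rot q)"
  unfolding vec_eq_iff forall_3
  by (simp add: quat_to_rot_def qconj_def transpose_def Let_def power2_eq_square algebra_simps)

lemma SO3_mult: "A \<in> SO3 \<Longrightarrow> B \<in> SO3 \<Longrightarrow> A ** B \<in> SO3"
  by (simp add: SO3_def orthogonal_matrix_mul det_mul)

lemma quat_to_rot_in_SO3: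
  assumes "q \<in> S3"
  shows "quat_to_rot q \<in> SO3"
  using assms transpose_quat_rot_hom_mult[of q] det_quat_rot_hom[of q]
  by (simp add: SO3_def quat_to_rot_eq_hom S3_iff_quat_sqnorm orthogonal_matrix)

definition cofactor3 :: "real^3^3 \<Rightarrow> real^3^3" where
  "cofactor3 R = vector [
    vector [R$2$2*R$3$3 - R$2$3*R$3$2, R$2$3*R$3$1 - R$2$1*R$3$3, R$2$1*R$3$2 - R$2$2*R$3$1],
    vector [R$1$3*R$3$2 - R$1$2*R$3$3, R$1$1*R$3$3 - R$1$3*R$3$1, R$1$2*R$3$1 - R$1$1*R$3$2],
    vector [R$1$2*R$2$3 - R$1$3*R$2$2, R$1$3*R$2$1 - R$1$1*R$2$3, R$1$1*R$2$2 - R$1$2*R$2$1]]"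

lemma transpose_cofactor3_mult: "transpose (cofactor3 R) ** R = det R *\<^sub>R mat 1"
  unfolding vec_eq_iff forall_3
  by (simp add: cofactor3_def det_3 transpose_def matrix_matrix_mult_def sum_3 mat_def algebra_simps)

lemma cofactor3_SO3:
  assumes "R \<in> SO3"
  shows "cofactor3 R = R"
proof -
  have R: "R ** transpose R = mat 1" "det R = 1"
    using assms by (auto simp: SO3_def orthogonal_matrix_def)
  have "transpose (cofactor3 R) = (transpose (cofactor3 R) ** R) ** transpose R"
    by (simp only: matrix_mul_assoc[symmetric] R matrix_mul_rid)
  also have "\<dots> = transpose R"
    by (simp add: transpose_cofactor3_mult R)
  finally show ?thesis
    by (metis transpose_transpose)
qed

lemma SO3_entry_identities:
  assumes "R \<in> SO3"
  shows "R$1$1 = R$2$2*R$3$3 - R$2$3*R$3$2" "R$1$2 = R$2$3*R$3$1 - R$2$1*R$3$3"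
    "R$1$3 = R$2$1*R$3$2 - R$2$2*R$3$1" "R$2$1 = R$1$3*R$3$2 - R$1$2*R$3$3"
    "R$2$2 = R$1$1*R$3$3 - R$1$3*R$3$1" "R$2$3 = R$1$2*R$3$1 - R$1$1*R$3$2"
    "R$3$1 = R$1$2*R$2$3 - R$1$3*R$2$2" "R$3$2 = R$1$3*R$2$1 - R$1$1*R$2$3"
    "R$3$3 = R$1$1*R$2$2 - R$1$2*R$2$1"
    "R$1$1^2 + R$2$1^2 + R$3$1^2 = 1" "R$1$2^2 + R$2$2^2 + R$3$2^2 = 1"
    "R$1$3^2 + R$2$3^2 + R$3$3^2 = 1"
    "R$1$1*R$1$2 + R$2$1*R$2$2 + R$3$1*R$3$2 = 0" "R$1$1*R$1$3 + R$2$1*R$2$3 + R$3$1*R$3$3 = 0"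
    "R$1$2*R$1$3 + R$2$2*R$2$3 + R$3$2*R$3$3 = 0"
proof -
  have cof: "cofactor3 R $ i $ j = R $ i $ j" for i j
    using cofactor3_SO3[OF assms] by simp
  have orth: "(transpose R ** R) $ i $ j = mat 1 $ i $ j" for i j
    using assms by (simp add: SO3_def orthogonal_matrix_def)
  show "R$1$1 = R$2$2*R$3$3 - R$2$3*R$3$2" "R$1$2 = R$2$3*R$3$1 - R$2$1*R$3$3"
    "R$1$3 = R$2$1*R$3$2 - R$2$2*R$3$1" "R$2$1 = R$1$3*R$3$2 - R$1$2*R$3$3"
    "R$2$2 = R$1$1*R$3$3 - R$1$3*R$3$1" "R$2$3 = R$1$2*R$3$1 - R$1$1*R$3$2"
    "R$3$1 = R$1$2*R$2$3 - R$1$3*R$2$2" "R$3$2 = R$1$3*R$2$1 - R$1$1*R$2$3"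
    "R$3$3 = R$1$1*R$2$2 - R$1$2*R$2$1"
    using cof[of 1 1] cof[of 1 2] cof[of 1 3] cof[of 2 1] cof[of 2 2] cof[of 2 3]
      cof[of 3 1] cof[of 3 2] cof[of 3 3]
    by (simp_all add: cofactor3_def)
  show "R$1$1^2 + R$2$1^2 + R$3$1^2 = 1" "R$1$2^2 + R$2$2^2 + R$3$2^2 = 1"
    "R$1$3^2 + R$2$3^2 + R$3$3^2 = 1"
    "R$1$1*R$1$2 + R$2$1*R$2$2 + R$3$1*R$3$2 = 0" "R$1$1*R$1$3 + R$2$1*R$2$3 + R$3$1*R$3$3 = 0"
    "R$1$2*R$1$3 + R$2$2*R$2$3 + R$3$2*R$3$3 = 0"
    using orth[of 1 1] orth[of 2 2] orth[of 3 3] orth[of 1 2] orth[of 1 3] orth[of 2 3]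
    by (simp_all add: matrix_matrix_mult_def transpose_def mat_def sum_3 power2_eq_square)
qed

text \<open>Where \<open>1 + tr R > 0\<close>, the classical formula
  \<open>q \<propto> (1 + tr R, R\<^sub>3\<^sub>2 - R\<^sub>2\<^sub>3, R\<^sub>1\<^sub>3 - R\<^sub>3\<^sub>1, R\<^sub>2\<^sub>1 - R\<^sub>1\<^sub>2)\<close> gives a preimage.\<close>
lemma quat_to_rot_surj_trace_pos:
  assumes R: "R \<in> SO3" and pos: "1 + R$1$1 + R$2$2 + R$3$3 > 0"
  shows "\<exists>q\<in>S3. quat_to_rot q = R"
proof -
  define w where "w = 1 + R$1$1 + R$2$2 + R$3$3"
  define p :: "real^4" where "p = vector [w, R$3$2 - R$2$3, R$1$3 - R$3$1, R$2$1 - R$1$2]"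
  define q where "q = (1 / (2 * sqrt w)) *\<^sub>R p"
  note R_eqs = SO3_entry_identities[OF R]
  have "w > 0"
    using pos by (simp add: w_def)
  have sqnorm_p: "quat_sqnorm p = 4 * w"
    unfolding p_def quat_sqnorm_def w_def vector_4 using R_eqs by algebra
  have hom_p: "quat_rot_hom p = (4 * w) *\<^sub>R R"
    unfolding vec_eq_iff forall_3 p_def w_def
    by (simp add: quat_rot_hom_def Let_def, intro conjI; use R_eqs in algebra)
  have scale: "(1 / (2 * sqrt w))^2 = 1 / (4 * w)"
    using \<open>w > 0\<close> by (simp add: power2_eq_square field_simps)
  have "q \<in> S3"
    using \<open>w > 0\<close> by (simp add: S3_iff_quat_sqnorm q_def quat_sqnorm_scaleR scale sqnorm_p)
  moreover have "quat_to_rot q = R"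
    using \<open>w > 0\<close> \<open>q \<in> S3\<close>
    by (simp add: quat_to_rot_eq_hom q_def quat_rot_hom_scaleR scale hom_p)
  ultimately show ?thesis
    by blast
qed

text \<open>Left multiplication by \<open>\<gamma>(e)\<close> for a basis quaternion \<open>e\<close> flips the signs of two
  diagonal entries, so one of the four translates of \<open>R\<close> satisfies the trace condition above.\<close>
lemma quat_to_rot_surj:
  assumes R: "R \<in> SO3"
  shows "\<exists>q\<in>S3. quat_to_rot q = R"
proof -
  have shifted: "\<exists>q\<in>S3. quat_to_rot q = R"
    if e: "e \<in> S3" and involution: "quat_to_rot e ** quat_to_rot e = mat 1"
      and pos: "1 + (quat_to_rot e ** R)$1$1 + (quat_to_rot e ** R)$2$2 + (quat_to_rot e ** R)$3$3 > 0"
    for e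
  proof -
    obtain p where p: "p \<in> S3" "quat_to_rot p = quat_to_rot e ** R"
      using quat_to_rot_surj_trace_pos[OF SO3_mult[OF quat_to_rot_in_SO3[OF e] R] pos] by blast
    have "quat_to_rot (qmul e p) = R"
      by (simp add: quat_to_rot_qmul e p matrix_mul_assoc involution)
    then show ?thesis
      using qmul_in_S3[OF e p(1)] by blast
  qed
  define e1 e2 e3 e4 :: "real^4"
    where "e1 = vector [1, 0, 0, 0]" and "e2 = vector [0, 1, 0, 0]"
      and "e3 = vector [0, 0, 1, 0]" and "e4 = vector [0, 0, 0, 1]"
  have basis: "e \<in> S3" "quat_to_rot e ** quat_to_rot e = mat 1" if "e \<in> {e1, e2, e3, e4}" for e
    using that unfolding vec_eq_iff forall_3
    by (auto simp: e1_def e2_def e3_def e4_def S3_iff_quat_sqnorm quat_sqnorm_def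
        quat_to_rot_def matrix_matrix_mult_def sum_3 mat_def)
  have diag:
    "(quat_to_rot e1 ** R)$1$1 = R$1$1" "(quat_to_rot e1 ** R)$2$2 = R$2$2" "(quat_to_rot e1 ** R)$3$3 = R$3$3"
    "(quat_to_rot e2 ** R)$1$1 = R$1$1" "(quat_to_rot e2 ** R)$2$2 = -R$2$2" "(quat_to_rot e2 ** R)$3$3 = -R$3$3"
    "(quat_to_rot e3 ** R)$1$1 = -R$1$1" "(quat_to_rot e3 ** R)$2$2 = R$2$2" "(quat_to_rot e3 ** R)$3$3 = -R$3$3"
    "(quat_to_rot e4 ** R)$1$1 = -R$1$1" "(quat_to_rot e4 ** R)$2$2 = -R$2$2" "(quat_to_rot e4 ** R)$3$3 = R$3$3"
    by (simp_all add: e1_def e2_def e3_def e4_def quat_to_rot_def matrix_matrix_mult_def sum_3)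
  have "1 + R$1$1 + R$2$2 + R$3$3 > 0 \<or> 1 + R$1$1 - R$2$2 - R$3$3 > 0 \<or>
        1 - R$1$1 + R$2$2 - R$3$3 > 0 \<or> 1 - R$1$1 - R$2$2 + R$3$3 > 0"
    by linarith
  then show ?thesis
    using shifted[OF basis[of e1]] shifted[OF basis[of e2]] shifted[OF basis[of e3]]
      shifted[OF basis[of e4]]
    by (auto simp: diag)
qed

section \<open>Singular value decomposition in dimension three\<close>

lemma linear_coeff_zero_if_quadratic_nonpos:
  fixes b c :: real
  assumes "\<And>t. 2 * t * b + t^2 * c \<le> 0"
  shows "b = 0"
proof -
  define a where "a = \<bar>c\<bar> + 1"
  have "a > 0" "2 * a + c > 0"
    by (auto simp: a_def abs_if)
  have "2 * (b / a) * b + (b / a)^2 * c = b^2 * (2 * a + c) / a^2"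
    using \<open>a > 0\<close> by (simp add: field_simps power2_eq_square)
  then have "b^2 * (2 * a + c) / a^2 \<le> 0"
    using assms[of "b / a"] by simp
  then have "b^2 \<le> 0"
    using \<open>a > 0\<close> \<open>2 * a + c > 0\<close> by (simp add: divide_le_0_iff mult_le_0_iff)
  then show ?thesis
    by simp
qed

text \<open>The first-order condition at a maximiser of \<open>|f x| / |x|\<close>: moving from \<open>v\<close> in an
  orthogonal direction \<open>w\<close> changes \<open>|f x|\<^sup>2 - |f v|\<^sup>2 |x|\<^sup>2\<close> by \<open>2t (f v \<bullet> f w) + O(t\<^sup>2)\<close>.\<close>
lemma linear_maximizer_images_orthogonal:
  fixes f :: "'a::real_inner \<Rightarrow> 'b::real_inner"
  assumes "linear f" and v: "norm v = 1" and vw: "v \<bullet> w = 0"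
    and max: "\<And>t. norm (f (v + t *\<^sub>R w)) \<le> norm (f v) * norm (v + t *\<^sub>R w)"
  shows "f v \<bullet> f w = 0"
proof (rule linear_coeff_zero_if_quadratic_nonpos)
  fix t :: real
  have "norm (f (v + t *\<^sub>R w))^2 \<le> (norm (f v) * norm (v + t *\<^sub>R w))^2"
    using max[of t] by (simp add: power_mono)
  moreover have "norm (f (v + t *\<^sub>R w))^2
      = norm (f v)^2 + 2 * t * (f v \<bullet> f w) + t^2 * norm (f w)^2"
    unfolding linear_add[OF \<open>linear f\<close>] linear_scale[OF \<open>linear f\<close>] power2_norm_eq_inner
    by (simp add: inner_add_left inner_add_right inner_commute power2_eq_square algebra_simps)
  moreover have "norm (v + t *\<^sub>R w)^2 = 1 + t^2 * norm w^2"
    using v vw unfolding power2_norm_eq_inner norm_eq_1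
    by (simp add: inner_add_left inner_add_right inner_commute power2_eq_square algebra_simps)
  ultimately show "2 * t * (f v \<bullet> f w) + t^2 * (norm (f w)^2 - norm (f v)^2 * norm w^2) \<le> 0"
    by (simp add: power_mult_distrib algebra_simps)
qed

lemma linear_norm_le_of_unit_bound:
  assumes "linear f"
    and bound: "\<And>y. norm y = 1 \<Longrightarrow> P y \<Longrightarrow> norm (f y) \<le> c"
    and scale: "\<And>x a. P x \<Longrightarrow> P (a *\<^sub>R x)" and "P x"
  shows "norm (f x) \<le> c * norm x"
proof (cases "x = 0")
  case True
  then show ?thesis
    using linear_0[OF \<open>linear f\<close>] by simp
next
  case False
  have "norm (f (x /\<^sub>R norm x)) \<le> c"
    using False by (intro bound scale \<open>P x\<close>) simp
  then show ?thesis
    using False by (simp add: linear_scale[OF \<open>linear f\<close>] field_simps)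
qed

lemma unit_orthogonal_exists:
  fixes x :: "real^3"
  obtains y where "norm y = 1" "x \<bullet> y = 0"
proof -
  obtain y where "y \<noteq> 0" "orthogonal x y"
    using orthogonal_to_vector_exists[of x] by auto
  then show thesis
    by (intro that[of "y /\<^sub>R norm y"]) (simp_all add: orthogonal_def)
qed

lemma orthogonal_matrix_of_orthonormal_columns3:
  fixes v1 v2 v3 :: "real^3"
  assumes "v1 \<bullet> v1 = 1" "v2 \<bullet> v2 = 1" "v3 \<bullet> v3 = 1" "v1 \<bullet> v2 = 0" "v1 \<bullet> v3 = 0" "v2 \<bullet> v3 = 0"
  shows "orthogonal_matrix (transpose (vector [v1, v2, v3] :: real^3^3))"
proof -
  have "vector [v1, v2, v3] ** transpose (vector [v1, v2, v3] :: real^3^3) = mat 1"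
    using assms unfolding vec_eq_iff forall_3
    by (simp add: matrix_matrix_mult_def sum_3 transpose_def mat_def inner_vec_def algebra_simps)
  then show ?thesis
    by (simp add: orthogonal_matrix)
qed

lemma right_singular_vectors_exist:
  fixes A :: "real^3^3"
  obtains v1 v2 v3 :: "real^3" where
    "v1 \<bullet> v1 = 1" "v2 \<bullet> v2 = 1" "v3 \<bullet> v3 = 1" "v1 \<bullet> v2 = 0" "v1 \<bullet> v3 = 0" "v2 \<bullet> v3 = 0"
    "(A *v v1) \<bullet> (A *v v2) = 0" "(A *v v1) \<bullet> (A *v v3) = 0" "(A *v v2) \<bullet> (A *v v3) = 0"
    "norm (A *v v3) \<le> norm (A *v v2)" "norm (A *v v2) \<le> norm (A *v v1)"
proof -
  define g where "g x = norm (A *v x)" for x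
  have cont: "continuous_on S g" for S
    unfolding g_def by (intro continuous_intros)
  have lin: "linear ((*v) A)"
    by (rule matrix_vector_mul_linear)
  have "axis 1 1 \<in> sphere (0::real^3) 1"
    by simp
  then obtain v1 where v1: "v1 \<in> sphere 0 1" and max1: "\<forall>x\<in>sphere 0 1. g x \<le> g v1"
    using continuous_attains_sup[OF compact_sphere _ cont] by blast
  define W where "W = sphere 0 1 \<inter> {x. v1 \<bullet> x = 0}"
  obtain y where "norm y = 1" "v1 \<bullet> y = 0"
    using unit_orthogonal_exists by blast
  then have "W \<noteq> {}"
    unfolding W_def by auto
  moreover have "compact W"
    unfolding W_def by (rule compact_Int_closed[OF compact_sphere closed_hyperplane])
  ultimately obtain v2 where v2: "v2 \<in> W" and max2: "\<forall>x\<in>W. g x \<le> g v2"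
    using continuous_attains_sup[OF _ _ cont] by blast
  define v3 where "v3 = cross3 v1 v2"
  have n1: "v1 \<bullet> v1 = 1" "norm v1 = 1"
    using v1 by (simp_all add: norm_eq_1)
  have n2: "v2 \<bullet> v2 = 1" "norm v2 = 1" "v1 \<bullet> v2 = 0"
    using v2 by (simp_all add: W_def norm_eq_1)
  have n3: "v1 \<bullet> v3 = 0" "v2 \<bullet> v3 = 0"
    by (simp_all add: v3_def dot_cross_self)
  have "norm v3 ^ 2 = 1"
    using norm_cross_dot[of v1 v2] n1 n2 by (simp add: v3_def)
  then have "norm v3 = 1"
    by (simp add: norm_eq_1 power2_norm_eq_inner[symmetric])
  then have v3: "v3 \<in> W" "v3 \<bullet> v3 = 1" "norm v3 = 1"
    using n3 by (simp_all add: W_def norm_eq_1)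
  have bound1: "norm (A *v x) \<le> norm (A *v v1) * norm x" for x
    by (rule linear_norm_le_of_unit_bound[OF lin, where P = "\<lambda>_. True"])
      (use max1 in \<open>simp_all add: g_def\<close>)
  have bound2: "norm (A *v x) \<le> norm (A *v v2) * norm x" if "v1 \<bullet> x = 0" for x
    by (rule linear_norm_le_of_unit_bound[OF lin, where P = "\<lambda>x. v1 \<bullet> x = 0"])
      (use max2 that in \<open>simp_all add: g_def W_def\<close>)
  have "(A *v v1) \<bullet> (A *v v2) = 0"
    by (rule linear_maximizer_images_orthogonal[OF lin n1(2) n2(3) bound1])
  moreover have "(A *v v1) \<bullet> (A *v v3) = 0"
    by (rule linear_maximizer_images_orthogonal[OF lin n1(2) n3(1) bound1])
  moreover have "(A *v v2) \<bullet> (A *v v3) = 0"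
    by (rule linear_maximizer_images_orthogonal[OF lin n2(2) n3(2) bound2])
      (simp add: inner_add_right n2 n3)
  moreover have "g v2 \<le> g v1" "g v3 \<le> g v2"
    using v2 v3 max1 max2 by (auto simp: W_def)
  ultimately show thesis
    using n1 n2 n3 v3 by (intro that) (simp_all add: g_def)
qed

text \<open>Where singular values vanish (only trailing ones can), the missing directions come from an
  orthogonal unit vector and a cross product.\<close>
lemma left_singular_vectors_exist:
  fixes w1 w2 w3 :: "real^3"
  assumes "w1 \<bullet> w2 = 0" "w1 \<bullet> w3 = 0" "w2 \<bullet> w3 = 0"
    and "norm w3 \<le> norm w2" "norm w2 \<le> norm w1"
  obtains u1 u2 u3 :: "real^3" where
    "u1 \<bullet> u1 = 1" "u2 \<bullet> u2 = 1" "u3 \<bullet> u3 = 1" "u1 \<bullet> u2 = 0" "u1 \<bullet> u3 = 0" "u2 \<bullet> u3 = 0"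
    "w1 = norm w1 *\<^sub>R u1" "w2 = norm w2 *\<^sub>R u2" "w3 = norm w3 *\<^sub>R u3"
proof -
  define u1 where "u1 = (if w1 = 0 then axis 1 1 else w1 /\<^sub>R norm w1)"
  obtain e where e: "norm e = 1" "u1 \<bullet> e = 0"
    using unit_orthogonal_exists by blast
  define u2 where "u2 = (if w2 = 0 then e else w2 /\<^sub>R norm w2)"
  define u3 where "u3 = (if w3 = 0 then cross3 u1 u2 else w3 /\<^sub>R norm w3)"
  have w2_zero: "w2 = 0" if "w1 = 0"
    using assms(5) that by simp
  have w3_zero: "w3 = 0" if "w2 = 0"
    using assms(4) that by simp
  have m1: "u1 \<bullet> u1 = 1"
    by (simp add: u1_def norm_eq_1[symmetric])
  have m2: "u2 \<bullet> u2 = 1"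
    using e by (simp add: u2_def norm_eq_1[symmetric])
  have m12: "u1 \<bullet> u2 = 0"
    using e assms(1) w2_zero by (auto simp: u1_def u2_def)
  have "cross3 u1 u2 \<bullet> cross3 u1 u2 = 1"
    using norm_cross_dot[of u1 u2] m1 m2 m12 by (simp add: power_mult_distrib power2_norm_eq_inner)
  then have m3: "u3 \<bullet> u3 = 1"
    by (simp add: u3_def norm_eq_1[symmetric])
  have m13: "u1 \<bullet> u3 = 0" and m23: "u2 \<bullet> u3 = 0"
    using assms(2,3) w2_zero w3_zero by (auto simp: u1_def u2_def u3_def dot_cross_self)
  have w: "w1 = norm w1 *\<^sub>R u1" "w2 = norm w2 *\<^sub>R u2" "w3 = norm w3 *\<^sub>R u3"
    by (simp_all add: u1_def u2_def u3_def)
  show thesis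
    by (rule that[OF m1 m2 m3 m12 m13 m23 w])
qed

lemma ordinary_svd_exists:
  fixes A :: "real^3^3"
  shows "\<exists>U s V. ordinary_svd A U s V"
proof -
  obtain v1 v2 v3 where v:
    "v1 \<bullet> v1 = 1" "v2 \<bullet> v2 = 1" "v3 \<bullet> v3 = 1" "v1 \<bullet> v2 = 0" "v1 \<bullet> v3 = 0" "v2 \<bullet> v3 = 0"
    and Av: "(A *v v1) \<bullet> (A *v v2) = 0" "(A *v v1) \<bullet> (A *v v3) = 0" "(A *v v2) \<bullet> (A *v v3) = 0"
    and decr: "norm (A *v v3) \<le> norm (A *v v2)" "norm (A *v v2) \<le> norm (A *v v1)"
    by (rule right_singular_vectors_exist)
  define s1 s2 s3 where "s1 = norm (A *v v1)" and "s2 = norm (A *v v2)" and "s3 = norm (A *v v3)"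
  obtain u1 u2 u3 where u:
    "u1 \<bullet> u1 = 1" "u2 \<bullet> u2 = 1" "u3 \<bullet> u3 = 1" "u1 \<bullet> u2 = 0" "u1 \<bullet> u3 = 0" "u2 \<bullet> u3 = 0"
    and Au: "A *v v1 = s1 *\<^sub>R u1" "A *v v2 = s2 *\<^sub>R u2" "A *v v3 = s3 *\<^sub>R u3"
    using left_singular_vectors_exist[OF Av decr] unfolding s1_def s2_def s3_def by blast
  define V where "V = transpose (vector [v1, v2, v3] :: real^3^3)"
  define U where "U = transpose (vector [u1, u2, u3] :: real^3^3)"
  define s :: "real^3" where "s = vector [s1, s2, s3]"
  have V: "orthogonal_matrix V"
    unfolding V_def by (rule orthogonal_matrix_of_orthonormal_columns3) (use v in \<open>simp_all add: inner_commute\<close>)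
  have U: "orthogonal_matrix U"
    unfolding U_def by (rule orthogonal_matrix_of_orthonormal_columns3) (use u in \<open>simp_all add: inner_commute\<close>)
  have "(A *v v1)$i = s1 * u1$i" "(A *v v2)$i = s2 * u2$i" "(A *v v3)$i = s3 * u3$i" for i
    using Au by simp_all
  then have "A ** V = U ** diag3 s"
    unfolding vec_eq_iff forall_3
    by (simp add: V_def U_def s_def diag3_def matrix_matrix_mult_def matrix_vector_mult_def
        transpose_def sum_3 mult.commute)
  then have "A = U ** diag3 s ** transpose V"
    using V by (metis matrix_mul_assoc matrix_mul_rid orthogonal_matrix_def)
  then have "ordinary_svd A U s V"
    unfolding ordinary_svd_def using U V decr by (simp add: s_def s1_def s2_def s3_def)
  then show ?thesis
    by blast
qed

lemma orthogonal_matrix_sign_fix_in_SO3: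
  assumes "orthogonal_matrix U"
  shows "U ** diag3 (vector [1, 1, det U]) \<in> SO3"
proof -
  have sq: "det U * det U = 1"
    using det_orthogonal_matrix[OF assms] by auto
  have "orthogonal_matrix (diag3 (vector [1, 1, det U]))"
    unfolding orthogonal_matrix vec_eq_iff forall_3
    by (simp add: diag3_def transpose_def matrix_matrix_mult_def sum_3 mat_def sq)
  moreover have "det (diag3 (vector [1, 1, det U])) = det U"
    by (simp add: det_3 diag3_def)
  ultimately show ?thesis
    using assms sq by (simp add: SO3_def orthogonal_matrix_mul det_mul)
qed

lemma diag3_sign_fix:
  assumes "a * a = 1" and "b * b = (1::real)"
  shows "diag3 (vector [1, 1, a]) ** diag3 (vector [x, y, a * b * z]) ** transpose (diag3 (vector [1, 1, b]))
       = diag3 (vector [x, y, z])"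
  unfolding vec_eq_iff forall_3 using assms
  by (simp add: diag3_def transpose_def matrix_matrix_mult_def sum_3 algebra_simps)

lemma proper_svd_exists:
  fixes A :: "real^3^3"
  obtains U V s where "U \<in> SO3" "V \<in> SO3" "proper_svd_S A = diag3 s"
    "A = U ** diag3 s ** transpose V"
proof -
  obtain U' s V' where choice: "(SOME (U', s, V'). ordinary_svd A U' s V') = (U', s, V')"
    by (metis prod_cases3)
  have "ordinary_svd A U' s V'"
    using someI_ex[of "\<lambda>(U', s, V'). ordinary_svd A U' s V'"] ordinary_svd_exists[of A]
    unfolding choice by auto
  then have U': "orthogonal_matrix U'" and V': "orthogonal_matrix V'"
    and A: "A = U' ** diag3 s ** transpose V'"
    by (auto simp: ordinary_svd_def)
  define s' :: "real^3" where "s' = vector [s$1, s$2, det (U' ** V') * s$3]"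
  define U where "U = U' ** diag3 (vector [1, 1, det U'])"
  define V where "V = V' ** diag3 (vector [1, 1, det V'])"
  have du: "det U' * det U' = 1" and dv: "det V' * det V' = 1"
    using det_orthogonal_matrix[OF U'] det_orthogonal_matrix[OF V'] by auto
  have "U ** diag3 s' ** transpose V
      = U' ** (diag3 (vector [1, 1, det U']) ** diag3 (vector [s$1, s$2, det U' * det V' * s$3])
           ** transpose (diag3 (vector [1, 1, det V']))) ** transpose V'"
    by (simp add: U_def V_def s'_def det_mul matrix_transpose_mul matrix_mul_assoc)
  also have "\<dots> = A"
  proof -
    have "vector [s$1, s$2, s$3] = s"
      unfolding vec_eq_iff forall_3 by simp
    then show ?thesis
      using A by (simp add: diag3_sign_fix[OF du dv])
  qed
  finally show thesis
    using orthogonal_matrix_sign_fix_in_SO3[OF U'] orthogonal_matrix_sign_fix_in_SO3[OF V']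
    by (intro that[of U V s']) (simp_all add: U_def V_def s'_def proper_svd_S_def choice)
qed

section \<open>The uniform measure on S3 and the Haar measure on SO(3)\<close>

lemma continuous_measurable_restrict_space:
  assumes "continuous_on UNIV f" and "\<And>x. x \<in> A \<Longrightarrow> f x \<in> B"
  shows "f \<in> measurable (restrict_space borel A) (restrict_space borel B)"
  by (rule measurable_restrict_space2)
    (use assms in \<open>auto intro: measurable_restrict_space1 borel_measurable_continuous_onI
      simp: space_restrict_space\<close>)

lemma continuous_on_orthogonal_transformation:
  fixes g :: "real^'n \<Rightarrow> real^'n"
  shows "orthogonal_transformation g \<Longrightarrow> continuous_on UNIV g"
  by (simp add: linear_continuous_on orthogonal_transformation_linear linear_linear)

lemma emeasure_lborel_orthogonal_vimage:
  fixes g :: "real^'n::{finite,wellorder} \<Rightarrow> real^'n::_"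
  assumes g: "orthogonal_transformation g" and B: "B \<in> sets borel" "bounded B"
  shows "emeasure lborel (g -` B) = emeasure lborel B"
proof -
  have g_inv: "orthogonal_transformation (inv g)"
    using g by (rule orthogonal_transformation_inv)
  have vimage_eq: "g -` B = inv g ` B"
    using g by (simp add: bij_vimage_eq_inv_image orthogonal_transformation_bij)
  have "g -` B \<in> sets borel"
    using borel_measurable_continuous_onI[OF continuous_on_orthogonal_transformation[OF g]] B
    by (simp add: measurable_sets_borel)
  moreover have "bounded (g -` B)"
    unfolding vimage_eq using B(2) orthogonal_transformation_linear[OF g_inv]
    by (simp add: bounded_linear_image linear_conv_bounded_linear)
  moreover have "measure lebesgue (inv g ` B) = measure lebesgue B"
    using B by (intro measure_orthogonal_image[OF g_inv] bounded_set_imp_lmeasurable) auto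
  ultimately show ?thesis
    using B emeasure_bounded_finite[of B] emeasure_bounded_finite[of "g -` B"]
    by (simp add: vimage_eq emeasure_eq_ennreal_measure)
qed

lemma distr_uniform_cball_orthogonal:
  fixes g :: "real^'n::{finite,wellorder} \<Rightarrow> real^'n::_"
  assumes g: "orthogonal_transformation g"
  shows "distr (uniform_measure lborel (cball 0 r)) borel g = uniform_measure lborel (cball 0 r)"
    (is "distr ?U borel g = ?U")
proof (rule measure_eqI)
  have g_borel: "g \<in> borel_measurable borel"
    by (rule borel_measurable_continuous_onI[OF continuous_on_orthogonal_transformation[OF g]])
  then have g_meas: "g \<in> measurable ?U borel"
    by (simp add: measurable_cong_sets[OF sets_uniform_measure refl])
  show "sets (distr ?U borel g) = sets ?U"
    by simp
  fix X
  assume "X \<in> sets (distr ?U borel g)"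
  then have X: "X \<in> sets borel"
    by simp
  have ball: "g -` cball 0 r = cball 0 r"
    using orthogonal_transformation_norm[OF g] by auto
  have "g -` X \<in> sets borel"
    using g_borel X by (rule measurable_sets_borel)
  moreover have "emeasure lborel (g -` (cball 0 r \<inter> X)) = emeasure lborel (cball 0 r \<inter> X)"
    using X by (intro emeasure_lborel_orthogonal_vimage[OF g]) auto
  ultimately show "emeasure (distr ?U borel g) X = emeasure ?U X"
    using X by (simp add: emeasure_distr[OF g_meas X] ball)
qed

lemma measurable_orthogonal_transformation_S3:
  "orthogonal_transformation g \<Longrightarrow> g \<in> measurable (restrict_space borel S3) (restrict_space borel S3)"
  by (intro continuous_measurable_restrict_space continuous_on_orthogonal_transformation)
    (simp_all add: S3_def orthogonal_transformation_norm)

definition radial_proj :: "real^4 \<Rightarrow> real^4" where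
  "radial_proj x = (if x = 0 then axis 1 1 else x /\<^sub>R norm x)"

lemma unif_S3_eq_distr_radial_proj:
  "unif_S3 = distr (uniform_measure lborel (cball 0 1)) (restrict_space borel S3) radial_proj"
  by (simp add: unif_S3_def radial_proj_def[abs_def])

lemma measurable_radial_proj: "radial_proj \<in> measurable borel (restrict_space borel S3)"
proof (rule measurable_restrict_space2)
  show "radial_proj \<in> borel_measurable borel"
    unfolding radial_proj_def[abs_def] by measurable
qed (simp add: radial_proj_def S3_def)

lemma radial_proj_orthogonal:
  assumes g: "orthogonal_transformation g" and "x \<noteq> 0"
  shows "g (radial_proj x) = radial_proj (g x)"
proof -
  have "g x \<noteq> 0"
    using \<open>x \<noteq> 0\<close> orthogonal_transformation_norm[OF g, of x] by (metis norm_eq_zero)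
  then show ?thesis
    using \<open>x \<noteq> 0\<close> orthogonal_transformation_norm[OF g, of x]
    by (simp add: radial_proj_def orthogonal_transformation_scaleR[OF g])
qed

lemma sets_unif_S3 [measurable_cong]: "sets unif_S3 = sets (restrict_space borel S3)"
  by (simp add: unif_S3_def)

lemma measurable_unif_S3: "measurable unif_S3 N = measurable (restrict_space borel S3) N"
  by (rule measurable_cong_sets[OF sets_unif_S3 refl])

lemma space_unif_S3: "space unif_S3 = S3"
  by (simp add: unif_S3_def space_restrict_space)

lemma prob_space_unif_S3: "prob_space unif_S3"
  unfolding unif_S3_eq_distr_radial_proj
proof (rule prob_space.prob_space_distr)
  show "prob_space (uniform_measure lborel (cball (0::real^4) 1))"
    using emeasure_lborel_cball_finite[of "0::real^4" 1] content_cball_gt_0_iff[of "0::real^4" 1]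
    by (intro prob_space_uniform_measure) (simp_all add: emeasure_eq_ennreal_measure)
  show "radial_proj \<in> measurable (uniform_measure lborel (cball 0 1)) (restrict_space borel S3)"
    using measurable_radial_proj by (simp add: measurable_cong_sets[OF sets_uniform_measure refl])
qed

text \<open>The radial projection commutes with \<open>g\<close> away from the null set \<open>{0}\<close>, so the
  invariance of the uniform measure on the ball passes to its image on the sphere.\<close>
lemma distr_unif_S3_orthogonal:
  assumes g: "orthogonal_transformation g"
  shows "distr unif_S3 (restrict_space borel S3) g = unif_S3"
proof -
  define U where "U = uniform_measure lborel (cball (0::real^4) 1)"
  have unif: "unif_S3 = distr U (restrict_space borel S3) radial_proj"
    by (simp add: U_def unif_S3_eq_distr_radial_proj)
  have P_meas: "radial_proj \<in> measurable U (restrict_space borel S3)"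
    using measurable_radial_proj by (simp add: U_def measurable_cong_sets[OF sets_uniform_measure refl])
  have g_borel: "g \<in> borel_measurable borel"
    by (rule borel_measurable_continuous_onI[OF continuous_on_orthogonal_transformation[OF g]])
  then have g_meas: "g \<in> measurable U borel"
    by (simp add: U_def measurable_cong_sets[OF sets_uniform_measure refl])
  note g_S3 = measurable_orthogonal_transformation_S3[OF g]
  have "AE x in lborel. x \<noteq> 0"
    by (rule AE_lborel_singleton)
  then have "AE x in U. x \<noteq> 0"
    unfolding U_def by (intro AE_uniform_measureI) (auto elim: eventually_mono)
  then have "AE x in U. (g \<circ> radial_proj) x = (radial_proj \<circ> g) x"
    by (rule eventually_mono) (simp add: radial_proj_orthogonal[OF g])
  then have commute: "distr U (restrict_space borel S3) (g \<circ> radial_proj)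
      = distr U (restrict_space borel S3) (radial_proj \<circ> g)"
    by (intro distr_cong_AE measurable_comp[OF P_meas g_S3]
        measurable_comp[OF g_meas measurable_radial_proj]) simp_all
  have "distr unif_S3 (restrict_space borel S3) g = distr U (restrict_space borel S3) (g \<circ> radial_proj)"
    unfolding unif by (rule distr_distr[OF g_S3 P_meas])
  also have "\<dots> = distr (distr U borel g) (restrict_space borel S3) radial_proj"
    unfolding commute by (rule distr_distr[OF measurable_radial_proj g_meas, symmetric])
  also have "distr U borel g = U"
    unfolding U_def by (rule distr_uniform_cball_orthogonal[OF g])
  finally show ?thesis
    unfolding unif .
qed

definition unif_SO3 :: "(real^3^3) measure" where
  "unif_SO3 = distr unif_S3 (restrict_space borel SO3) quat_to_rot"

lemma vector_3_eq_vec_lambda: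
  "(vector [a, b, c] :: ('a::zero)^3) = (\<chi> i. if i = 1 then a else if i = 2 then b else c)"
  unfolding vec_eq_iff forall_3 by simp

lemma continuous_on_if_const:
  "continuous_on S f \<Longrightarrow> continuous_on S g \<Longrightarrow> continuous_on S (\<lambda>x. if P then f x else g x)"
  by (cases P) simp_all

lemma continuous_on_quat_to_rot: "continuous_on UNIV quat_to_rot"
  unfolding quat_to_rot_def[abs_def] Let_def vector_3_eq_vec_lambda
  by (intro continuous_intros continuous_on_vec_lambda continuous_on_if_const)

lemma quat_to_rot_measurable:
  "quat_to_rot \<in> measurable (restrict_space borel S3) (restrict_space borel SO3)"
  by (rule continuous_measurable_restrict_space[OF continuous_on_quat_to_rot quat_to_rot_in_SO3])

lemma sets_unif_SO3: "sets unif_SO3 = sets (restrict_space borel SO3)"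
  by (simp add: unif_SO3_def)

lemma prob_space_unif_SO3: "prob_space unif_SO3"
  unfolding unif_SO3_def
  by (rule prob_space.prob_space_distr[OF prob_space_unif_S3])
    (simp add: quat_to_rot_measurable measurable_unif_S3)

lemma continuous_on_matrix_mult:
  "continuous_on UNIV (\<lambda>R::real^3^3. Q ** R)" "continuous_on UNIV (\<lambda>R::real^3^3. R ** Q)"
  unfolding matrix_matrix_mult_def by (intro continuous_intros continuous_on_vec_lambda)+

lemma measurable_matrix_mult_SO3:
  assumes "Q \<in> SO3"
  shows "(\<lambda>R. Q ** R) \<in> measurable (restrict_space borel SO3) (restrict_space borel SO3)"
    and "(\<lambda>R. R ** Q) \<in> measurable (restrict_space borel SO3) (restrict_space borel SO3)"
  using assms by (auto intro: continuous_measurable_restrict_space continuous_on_matrix_mult SO3_mult)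

lemma distr_unif_SO3_lift:
  assumes g: "orthogonal_transformation g"
    and lift: "\<And>q. q \<in> S3 \<Longrightarrow> f (quat_to_rot q) = quat_to_rot (g q)"
    and f: "f \<in> measurable (restrict_space borel SO3) (restrict_space borel SO3)"
  shows "distr unif_SO3 (restrict_space borel SO3) f = unif_SO3"
proof -
  have rot: "quat_to_rot \<in> measurable unif_S3 (restrict_space borel SO3)"
    by (simp add: quat_to_rot_measurable measurable_unif_S3)
  have g_meas: "g \<in> measurable unif_S3 (restrict_space borel S3)"
    by (simp add: measurable_orthogonal_transformation_S3[OF g] measurable_unif_S3)
  have "distr unif_SO3 (restrict_space borel SO3) f
      = distr unif_S3 (restrict_space borel SO3) (f \<circ> quat_to_rot)"
    unfolding unif_SO3_def by (rule distr_distr[OF f rot])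
  also have "\<dots> = distr unif_S3 (restrict_space borel SO3) (quat_to_rot \<circ> g)"
    by (rule distr_cong) (simp_all add: space_unif_S3 lift)
  also have "\<dots> = distr (distr unif_S3 (restrict_space borel S3) g) (restrict_space borel SO3) quat_to_rot"
    by (rule distr_distr[OF quat_to_rot_measurable g_meas, symmetric])
  also have "\<dots> = unif_SO3"
    by (simp add: distr_unif_S3_orthogonal[OF g] unif_SO3_def)
  finally show ?thesis .
qed

lemma distr_unif_SO3_mult_left:
  assumes "Q \<in> SO3"
  shows "distr unif_SO3 (restrict_space borel SO3) (\<lambda>R. Q ** R) = unif_SO3"
proof -
  obtain u where u: "u \<in> S3" "quat_to_rot u = Q"
    using quat_to_rot_surj[OF assms] by blast
  show ?thesis
    by (rule distr_unif_SO3_lift[OF orthogonal_transformation_qmul_left[OF u(1)] _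
          measurable_matrix_mult_SO3(1)[OF assms]])
      (simp add: quat_to_rot_qmul u)
qed

lemma distr_unif_SO3_mult_right:
  assumes "Q \<in> SO3"
  shows "distr unif_SO3 (restrict_space borel SO3) (\<lambda>R. R ** Q) = unif_SO3"
proof -
  obtain v where v: "v \<in> S3" "quat_to_rot v = Q"
    using quat_to_rot_surj[OF assms] by blast
  show ?thesis
    by (rule distr_unif_SO3_lift[OF orthogonal_transformation_qmul_right[OF v(1)] _
          measurable_matrix_mult_SO3(2)[OF assms]])
      (simp add: quat_to_rot_qmul v)
qed

lemma nn_integral_indicator_invariant:
  assumes T: "T \<in> measurable M N" and inv: "distr M N T = M" and X: "X \<in> sets M"
  shows "(\<integral>\<^sup>+x. indicator X (T x) \<partial>M) = emeasure M X"
proof -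
  have "(\<integral>\<^sup>+x. indicator X (T x) \<partial>M) = (\<integral>\<^sup>+y. indicator X y \<partial>distr M N T)"
    by (rule nn_integral_distr[symmetric, OF T]) (unfold inv, rule borel_measurable_indicator[OF X])
  then show ?thesis
    using X by (simp add: inv)
qed

lemma measurable_matrix_mult_pair_SO3:
  assumes \<mu>: "sets \<mu> = sets (restrict_space borel SO3)" and \<nu>: "sets \<nu> = sets (restrict_space borel SO3)"
  shows "(\<lambda>p. snd p ** fst p) \<in> measurable (\<mu> \<Otimes>\<^sub>M \<nu>) (restrict_space borel SO3)"
proof -
  have id: "(\<lambda>x. x) \<in> measurable (restrict_space borel SO3) borel"
    by (rule measurable_restrict_space1[OF measurable_ident_sets[OF refl]])
  have "(\<lambda>p. (snd p, fst p))
      \<in> measurable (restrict_space borel SO3 \<Otimes>\<^sub>M restrict_space borel SO3) (borel \<Otimes>\<^sub>M borel)"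
    by (intro measurable_Pair measurable_compose[OF measurable_snd id]
        measurable_compose[OF measurable_fst id])
  then have swap: "(\<lambda>p. (snd p, fst p))
      \<in> borel_measurable (restrict_space borel SO3 \<Otimes>\<^sub>M restrict_space borel SO3)"
    by (simp only: borel_prod)
  have "continuous_on UNIV (\<lambda>p::(real^3^3) \<times> (real^3^3). fst p ** snd p)"
    unfolding matrix_matrix_mult_def by (intro continuous_intros continuous_on_vec_lambda)
  from borel_measurable_continuous_on[OF this swap]
  have "(\<lambda>p. snd p ** fst p)
      \<in> borel_measurable (restrict_space borel SO3 \<Otimes>\<^sub>M restrict_space borel SO3)"
    by simp
  moreover have "(\<lambda>p. snd p ** fst p)
      \<in> space (restrict_space borel SO3 \<Otimes>\<^sub>M restrict_space borel SO3) \<rightarrow> SO3"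
    by (auto simp: space_pair_measure space_restrict_space SO3_mult)
  ultimately show ?thesis
    unfolding measurable_cong_sets[OF sets_pair_measure_cong[OF \<mu> \<nu>] refl]
    by (intro measurable_restrict_space2)
qed

text \<open>Integrating \<open>1\<^sub>X(y x)\<close> against \<open>\<mu> \<otimes> \<nu>\<close> in either order
  (Fubini) gives \<open>\<mu> X\<close> by left invariance of \<open>\<mu>\<close> and \<open>\<nu> X\<close> by right invariance of \<open>\<nu>\<close>.\<close>
lemma left_invariant_eq_right_invariant_SO3:
  assumes \<mu>: "prob_space \<mu>" "sets \<mu> = sets (restrict_space borel SO3)"
    and left: "\<And>Q. Q \<in> SO3 \<Longrightarrow> distr \<mu> (restrict_space borel SO3) (\<lambda>R. Q ** R) = \<mu>"
    and \<nu>: "prob_space \<nu>" "sets \<nu> = sets (restrict_space borel SO3)"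
    and right: "\<And>Q. Q \<in> SO3 \<Longrightarrow> distr \<nu> (restrict_space borel SO3) (\<lambda>R. R ** Q) = \<nu>"
  shows "\<mu> = \<nu>"
proof (rule measure_eqI)
  interpret \<mu>: prob_space \<mu> by (rule \<mu>(1))
  interpret \<nu>: prob_space \<nu> by (rule \<nu>(1))
  interpret pair_prob_space \<mu> \<nu> by unfold_locales
  have spaces: "space \<mu> = SO3" "space \<nu> = SO3"
    using sets_eq_imp_space_eq[OF \<mu>(2)] sets_eq_imp_space_eq[OF \<nu>(2)]
    by (simp_all add: space_restrict_space)
  show "sets \<mu> = sets \<nu>"
    using \<mu>(2) \<nu>(2) by simp
  fix X
  assume X: "X \<in> sets \<mu>"
  define F where "F p = (indicator X (snd p ** fst p) :: ennreal)" for p :: "(real^3^3) \<times> (real^3^3)"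
  have F: "F \<in> borel_measurable (\<mu> \<Otimes>\<^sub>M \<nu>)"
    unfolding F_def using X \<mu>(2)
    by (intro measurable_compose[OF measurable_matrix_mult_pair_SO3[OF \<mu>(2) \<nu>(2)]]) simp
  have inner_\<mu>: "(\<integral>\<^sup>+x. F (x, y) \<partial>\<mu>) = emeasure \<mu> X" if "y \<in> space \<nu>" for y
    unfolding F_def using that X
    by (intro nn_integral_indicator_invariant[where N = "restrict_space borel SO3"])
      (auto simp: spaces left measurable_matrix_mult_SO3 measurable_cong_sets[OF \<mu>(2) refl])
  have inner_\<nu>: "(\<integral>\<^sup>+y. F (x, y) \<partial>\<nu>) = emeasure \<nu> X" if "x \<in> space \<mu>" for x
    unfolding F_def using that X \<mu>(2) \<nu>(2)
    by (intro nn_integral_indicator_invariant[where N = "restrict_space borel SO3"])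
      (auto simp: spaces right measurable_matrix_mult_SO3 measurable_cong_sets[OF \<nu>(2) refl])
  have "emeasure \<mu> X = (\<integral>\<^sup>+y. (\<integral>\<^sup>+x. F (x, y) \<partial>\<mu>) \<partial>\<nu>)"
    by (simp add: inner_\<mu> \<nu>.emeasure_space_1 cong: nn_integral_cong)
  also have "\<dots> = (\<integral>\<^sup>+x. (\<integral>\<^sup>+y. F (x, y) \<partial>\<nu>) \<partial>\<mu>)"
    by (rule Fubini[OF F])
  also have "\<dots> = emeasure \<nu> X"
    by (simp add: inner_\<nu> \<mu>.emeasure_space_1 cong: nn_integral_cong)
  finally show "emeasure \<mu> X = emeasure \<nu> X" .
qed

lemma Haar_SO3_eq_unif_SO3: "Haar_SO3 = unif_SO3"
  unfolding Haar_SO3_def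
proof (rule the_equality)
  have distr_self: "distr \<mu> \<mu> (\<lambda>R. Q ** R) = distr \<mu> (restrict_space borel SO3) (\<lambda>R. Q ** R)"
    if "sets \<mu> = sets (restrict_space borel SO3)" for \<mu> :: "(real^3^3) measure" and Q
    by (rule distr_cong) (simp_all add: that)
  show "prob_space unif_SO3 \<and> sets unif_SO3 = sets (restrict_space borel SO3) \<and>
      (\<forall>Q\<in>SO3. distr unif_SO3 unif_SO3 (\<lambda>R. Q ** R) = unif_SO3)"
    using distr_self[OF sets_unif_SO3] distr_unif_SO3_mult_left prob_space_unif_SO3 sets_unif_SO3
    by simp
  fix \<mu>
  assume \<mu>: "prob_space \<mu> \<and> sets \<mu> = sets (restrict_space borel SO3) \<and>
      (\<forall>Q\<in>SO3. distr \<mu> \<mu> (\<lambda>R. Q ** R) = \<mu>)"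
  show "\<mu> = unif_SO3"
  proof (rule left_invariant_eq_right_invariant_SO3)
    show "distr \<mu> (restrict_space borel SO3) (\<lambda>R. Q ** R) = \<mu>" if "Q \<in> SO3" for Q
      using \<mu> distr_self[of \<mu> Q] that by simp
  qed (use \<mu> in \<open>simp_all add: prob_space_unif_SO3 sets_unif_SO3 distr_unif_SO3_mult_right\<close>)
qed

section \<open>Laplace densities\<close>

lemma transpose_diag3: "transpose (diag3 s) = diag3 s"
  by (simp add: diag3_def transpose_def vec_eq_iff)

lemma trace_diag3_sub_diag3_quat_to_rot:
  "trace (diag3 s - diag3 s ** quat_to_rot p) =
     2 * (s$2 + s$3) * (p$2)^2 + 2 * (s$1 + s$3) * (p$3)^2 + 2 * (s$1 + s$2) * (p$4)^2"
  by (simp add: trace_def sum_3 diag3_def matrix_matrix_mult_def quat_to_rot_def Let_def algebra_simps)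

lemma inner_diag4_mult:
  "p \<bullet> (diag4 (vector [0, z1, z2, z3]) *v p) = z1 * (p$2)^2 + z2 * (p$3)^2 + z3 * (p$4)^2"
  by (simp add: inner_vec_def sum_4 diag4_def matrix_vector_mult_def power2_eq_square algebra_simps
      if_distrib cong: if_cong)

text \<open>Substituting \<open>\<gamma>(q) = U \<gamma>(p) V\<^sup>T\<close>, i.e. \<open>p = u\<^sup>* q v\<close> for preimages \<open>u, v\<close> of \<open>U, V\<close>, turns the
  exponent of the Rotation Laplace density into a quadratic form in \<open>p\<close> (without a \<open>p\<^sub>0\<close> term);
  the orthogonal map \<open>q \<mapsto> u\<^sup>* q v\<close> supplies \<open>M\<close>.\<close>
lemma trace_svd_eq_quadratic_form:
  assumes U: "U \<in> SO3" and V: "V \<in> SO3" and A: "A = U ** diag3 s ** transpose V"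
  shows "\<exists>M z1 z2 z3. orthogonal_matrix M \<and> (\<forall>q\<in>S3.
    trace (diag3 s - transpose A ** quat_to_rot q) =
      - (q \<bullet> ((M ** diag4 (vector [0, z1, z2, z3]) ** transpose M) *v q)))"
proof -
  obtain u where u: "u \<in> S3" "quat_to_rot u = U"
    using quat_to_rot_surj[OF U] by blast
  obtain v where v: "v \<in> S3" "quat_to_rot v = V"
    using quat_to_rot_surj[OF V] by blast
  define f where "f q = qmul (qconj u) (qmul q v)" for q
  have f: "orthogonal_transformation f"
    unfolding f_def[abs_def]
    using orthogonal_transformation_compose[OF orthogonal_transformation_qmul_left[OF qconj_in_S3[OF u(1)]]
        orthogonal_transformation_qmul_right[OF v(1)]]
    by (simp add: o_def)
  define M where "M = transpose (matrix f)"
  define Z where "Z = diag4 (vector [0, -2 * (s$2 + s$3), -2 * (s$1 + s$3), -2 * (s$1 + s$2)])"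
  have quadratic_form: "trace (diag3 s - transpose A ** quat_to_rot q) = - (q \<bullet> ((M ** Z ** transpose M) *v q))"
    if q: "q \<in> S3" for q
  proof -
    have rot_f: "quat_to_rot (f q) = transpose U ** quat_to_rot q ** V"
      using u v q
      by (simp add: f_def quat_to_rot_qmul qmul_in_S3 qconj_in_S3 quat_to_rot_qconj matrix_mul_assoc)
    have "trace (transpose A ** quat_to_rot q) = trace (V ** (diag3 s ** transpose U ** quat_to_rot q))"
      by (simp add: A matrix_transpose_mul matrix_mul_assoc transpose_diag3)
    also have "\<dots> = trace (diag3 s ** quat_to_rot (f q))"
      by (subst trace_mul_sym) (simp add: rot_f matrix_mul_assoc)
    finally have "trace (diag3 s - transpose A ** quat_to_rot q) = trace (diag3 s - diag3 s ** quat_to_rot (f q))"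
      by (simp add: trace_sub)
    also have "\<dots> = - (f q \<bullet> (Z *v f q))"
      unfolding trace_diag3_sub_diag3_quat_to_rot Z_def inner_diag4_mult by (simp add: algebra_simps)
    also have "f q \<bullet> (Z *v f q) = q \<bullet> ((M ** Z ** transpose M) *v q)"
    proof -
      have "q \<bullet> ((M ** Z ** transpose M) *v q) = q \<bullet> (M *v (Z *v (transpose M *v q)))"
        by (simp only: matrix_vector_mul_assoc matrix_mul_assoc)
      also have "\<dots> = (q v* M) \<bullet> (Z *v (transpose M *v q))"
        by (simp add: dot_lmul_matrix)
      also have "\<dots> = f q \<bullet> (Z *v f q)"
        by (simp add: M_def matrix_works orthogonal_transformation_linear[OF f])
      finally show ?thesis ..
    qed
    finally show ?thesis .
  qed
  have "orthogonal_matrix M"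
    using f by (simp add: M_def orthogonal_transformation_matrix)
  then show ?thesis
    using quadratic_form unfolding Z_def by blast
qed

lemma distr_density_normalized:
  fixes f :: "'b \<Rightarrow> real"
  assumes T: "T \<in> measurable M N" and f: "f \<in> borel_measurable N"
  shows "distr (density M (\<lambda>x. ennreal (f (T x) / (\<integral>x. f (T x) \<partial>M)))) N T
       = density (distr M N T) (\<lambda>y. ennreal (f y / (\<integral>y. f y \<partial>distr M N T)))"
  using f by (simp add: integral_distr[OF T f] density_distr[OF _ T])

lemma borel_measurable_RL_f: "RL_f A \<in> borel_measurable borel"
proof -
  have "continuous_on UNIV (\<lambda>R. trace (proper_svd_S A - transpose A ** R))"
    unfolding trace_def matrix_matrix_mult_def by (intro continuous_intros)
  then have [measurable]: "(\<lambda>R. trace (proper_svd_S A - transpose A ** R)) \<in> borel_measurable borel"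
    by (rule borel_measurable_continuous_onI)
  show ?thesis
    unfolding RL_f_def[abs_def] Let_def by measurable
qed

lemma borel_measurable_QL_f: "QL_f M Z \<in> borel_measurable borel"
proof -
  have "continuous_on UNIV (\<lambda>q. - (q \<bullet> ((M ** Z ** transpose M) *v q)))"
    unfolding inner_vec_def matrix_vector_mult_def by (intro continuous_intros continuous_on_vec_lambda)
  then have [measurable]: "(\<lambda>q. - (q \<bullet> ((M ** Z ** transpose M) *v q))) \<in> borel_measurable borel"
    by (rule borel_measurable_continuous_onI)
  show ?thesis
    unfolding QL_f_def[abs_def] Let_def by measurable
qed

lemma distr_QL_eq_RL:
  assumes "\<And>q. q \<in> S3 \<Longrightarrow> QL_f M Z q = RL_f A (quat_to_rot q)"
  shows "distr (QL M Z) (restrict_space borel SO3) quat_to_rot = RL A"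
proof -
  have rot: "quat_to_rot \<in> measurable unif_S3 (restrict_space borel SO3)"
    by (simp add: quat_to_rot_measurable measurable_unif_S3)
  have RL_meas: "RL_f A \<in> borel_measurable (restrict_space borel SO3)"
    by (rule measurable_restrict_space1[OF borel_measurable_RL_f])
  have QL_meas: "QL_f M Z \<in> borel_measurable unif_S3"
    using measurable_restrict_space1[OF borel_measurable_QL_f] by (simp add: measurable_unif_S3)
  have "(\<integral>q. QL_f M Z q \<partial>unif_S3) = (\<integral>q. RL_f A (quat_to_rot q) \<partial>unif_S3)"
    by (rule Bochner_Integration.integral_cong) (simp_all add: space_unif_S3 assms)
  then have "QL M Z = density unif_S3 (\<lambda>q. ennreal (RL_f A (quat_to_rot q) / (\<integral>q. RL_f A (quat_to_rot q) \<partial>unif_S3)))"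
    unfolding QL_def
    by (intro density_cong) (use QL_meas rot RL_meas in \<open>auto simp: space_unif_S3 assms\<close>)
  then show ?thesis
    by (simp add: distr_density_normalized[OF rot RL_meas] RL_def Haar_SO3_eq_unif_SO3 unif_SO3_def)
qed

theorem proposition4:
  fixes A :: "real^3^3"
  shows "\<exists>M z1 z2 z3. orthogonal_matrix M \<and>
    distr (QL M (diag4 (vector [0, z1, z2, z3]))) (restrict_space borel SO3) quat_to_rot = RL A"
proof -
  obtain U V s where UV: "U \<in> SO3" "V \<in> SO3" and S: "proper_svd_S A = diag3 s"
    and A: "A = U ** diag3 s ** transpose V"
    by (rule proper_svd_exists)
  obtain M z1 z2 z3 where M: "orthogonal_matrix M" and tr:
    "\<And>q. q \<in> S3 \<Longrightarrow> trace (diag3 s - transpose A ** quat_to_rot q) =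
       - (q \<bullet> ((M ** diag4 (vector [0, z1, z2, z3]) ** transpose M) *v q))"
    using trace_svd_eq_quadratic_form[OF UV A] by blast
  have "QL_f M (diag4 (vector [0, z1, z2, z3])) q = RL_f A (quat_to_rot q)" if "q \<in> S3" for q
    using tr[OF that] by (simp add: QL_f_def RL_f_def S)
  then show ?thesis
    using M distr_QL_eq_RL by blast
qed

end
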